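(* Let $n\ge2$ and $(\mathbb G,\lVert\cdot\rVert_{\mathrm{sf}})$ be a sub-Finsler free-Carnot group of step 2 and rank $n$, $\mathbb G=\mathbb R^n\times\bigwedge^2(\mathbb R^n)$, with an adequate scalar product, induced distance $d_{\mathrm{eu}}$ and unit sphere $\mathbb S_{\mathrm{eu}}$ centered at $0_{\mathbb G}$. There exists a constant $K$ such that for every $\varepsilon>0$, every sub-Finsler geodesic $\gamma:[0,1]\to\mathbb G$ with $\gamma(0)=0_{\mathbb G}$ and $\gamma(1)\in\mathbb S_{\mathrm{eu}}$, and every linear subspace $\mathcal P\le\mathbb R^n$: if $d_{\mathrm{eu}}(\pi(\gamma(t)),\mathcal P)<\varepsilon$ for every $t\in[0,1]$, then $d_{\mathrm{eu}}(\gamma(1),\mathcal P\times\bigwedge^2(\mathcal P))<K\varepsilon$.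
   Context: Group law: $(x_1,Y_1)*(x_2,Y_2)=(x_1+x_2,Y_1+Y_2+\tfrac12x_1\wedge x_2)$, $v\wedge w=v\otimes w-w\otimes v$; $\pi(x,Y)=x$. A sub-Finsler structure is a norm on $\mathbb R^n$ extended left-invariantly to the horizontal distribution; horizontal curves from $0_{\mathbb G}$ have the form $\gamma_u(t)=\int_0^tu+\tfrac12\int_0^t(\int_0^su)\wedge u(s)\,ds$ with $u\in L^1([0,1],\mathbb R^n)$ and length $\int_0^1\lVert u\rVert_{\mathrm{sf}}$; $d_{\mathrm{cc}}$ is the infimum of lengths of horizontal curves joining two points, and a geodesic between $g,h$ is a horizontal curve from $g$ to $h$ of length $d_{\mathrm{cc}}(g,h)$. Adequate scalar product: $\mathbb R^n\perp\bigwedge^2(\mathbb R^n)$ and $\langle v_1\wedge w_1,v_2\wedge w_2\rangle=\langle v_1,v_2\rangle\langle w_1,w_2\rangle-\langle v_1,w_2\rangle\langle w_1,v_2\rangle$. *)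

theory Defs
  imports "HOL-Analysis.Analysis"
begin

text \<open>Model of the free step-2 Carnot group of rank n:
  points are pairs (x, Y) with x in R^n and Y an antisymmetric n x n matrix,
  the matrix model of the second exterior power, where
  v wedge w = v tensor w - w tensor v.\<close>

type_synonym ('n) grp = "(real ^ 'n) \<times> (real ^ 'n ^ 'n)"

definition wedge :: "real ^ ('n::finite) \<Rightarrow> real ^ ('n::finite) \<Rightarrow> real ^ 'n ^ 'n" where
  "wedge v w = (\<chi> i j. v $ i * w $ j - w $ i * v $ j)"

definition antisym_mat :: "real ^ 'n ^ 'n \<Rightarrow> bool" where
  "antisym_mat Y \<longleftrightarrow> (\<forall>i j. Y $ i $ j = - (Y $ j $ i))"

definition carrierG :: "('n::finite) grp set" where
  "carrierG = {p. antisym_mat (snd p)}"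

definition gmul :: "('n::finite) grp \<Rightarrow> 'n grp \<Rightarrow> 'n grp" where
  "gmul p q = (fst p + fst q, snd p + snd q + (1/2) *\<^sub>R wedge (fst p) (fst q))"

definition is_norm :: "(real ^ ('n::finite) \<Rightarrow> real) \<Rightarrow> bool" where
  "is_norm N \<longleftrightarrow> (\<forall>x. N x \<ge> 0) \<and> (\<forall>x. N x = 0 \<longleftrightarrow> x = 0)
     \<and> (\<forall>c x. N (c *\<^sub>R x) = \<bar>c\<bar> * N x) \<and> (\<forall>x y. N (x + y) \<le> N x + N y)"

text \<open>Horizontal curve from the identity with control u.\<close>
definition hcurve :: "(real \<Rightarrow> real ^ 'n) \<Rightarrow> real \<Rightarrow> 'n grp" where
  "hcurve u t = (integral {0..t} u,
     (1/2) *\<^sub>R integral {0..t} (\<lambda>s. wedge (integral {0..s} u) (u s)))"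

definition admissible :: "(real \<Rightarrow> real ^ 'n) \<Rightarrow> bool" where
  "admissible u \<longleftrightarrow> u absolutely_integrable_on {0..1}"

definition sf_length :: "(real ^ ('n::finite) \<Rightarrow> real) \<Rightarrow> (real \<Rightarrow> real ^ 'n) \<Rightarrow> real" where
  "sf_length N u = integral {0..1} (\<lambda>t. N (u t))"

text \<open>Horizontal curves from g are left translates g * gamma_u.\<close>
definition dcc :: "(real ^ ('n::finite) \<Rightarrow> real) \<Rightarrow> 'n grp \<Rightarrow> 'n grp \<Rightarrow> real" where
  "dcc N g h = Inf {sf_length N u | u. admissible u \<and> gmul g (hcurve u 1) = h}"

definition is_geodesic :: "(real ^ ('n::finite) \<Rightarrow> real) \<Rightarrow> 'n grp \<Rightarrow> 'n grp \<Rightarrow> (real \<Rightarrow> 'n grp) \<Rightarrow> bool" where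
  "is_geodesic N g h \<gamma> \<longleftrightarrow> (\<exists>u. admissible u \<and> (\<forall>t\<in>{0..1}. \<gamma> t = gmul g (hcurve u t))
      \<and> gmul g (hcurve u 1) = h \<and> sf_length N u = dcc N g h)"

definition adequate_ip :: "(('n::finite) grp \<Rightarrow> 'n grp \<Rightarrow> real) \<Rightarrow> bool" where
  "adequate_ip ip \<longleftrightarrow>
     (\<forall>q. linear (\<lambda>p. ip p q)) \<and> (\<forall>p q. ip p q = ip q p)
     \<and> (\<forall>p\<in>carrierG. p \<noteq> 0 \<longrightarrow> ip p p > 0)
     \<and> (\<forall>x Y. antisym_mat Y \<longrightarrow> ip (x, 0) (0, Y) = 0)
     \<and> (\<forall>v1 w1 v2 w2. ip (0, wedge v1 w1) (0, wedge v2 w2) =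
          ip (v1, 0) (v2, 0) * ip (w1, 0) (w2, 0) - ip (v1, 0) (w2, 0) * ip (w1, 0) (v2, 0))"

definition d_eu :: "(('n::finite) grp \<Rightarrow> 'n grp \<Rightarrow> real) \<Rightarrow> 'n grp \<Rightarrow> 'n grp \<Rightarrow> real" where
  "d_eu ip p q = sqrt (ip (p - q) (p - q))"

definition setdist_eu :: "(('n::finite) grp \<Rightarrow> 'n grp \<Rightarrow> real) \<Rightarrow> 'n grp \<Rightarrow> 'n grp set \<Rightarrow> real" where
  "setdist_eu ip p S = Inf {d_eu ip p q | q. q \<in> S}"

definition hdist_eu :: "(('n::finite) grp \<Rightarrow> 'n grp \<Rightarrow> real) \<Rightarrow> real ^ ('n::finite) \<Rightarrow> (real ^ 'n) set \<Rightarrow> real" where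
  "hdist_eu ip x P = Inf {d_eu ip (x, 0) (y, 0) | y. y \<in> P}"

definition proj :: "('n::finite) grp \<Rightarrow> real ^ 'n" where
  "proj p = fst p"

definition layer_sub :: "(real ^ 'n) set \<Rightarrow> 'n grp set" where
  "layer_sub P = {(x, Y). x \<in> P \<and> Y \<in> span {wedge v w | v w. v \<in> P \<and> w \<in> P}}"

end

theory Submission
  imports Defs
begin

text \<open>The length of a geodesic from \<open>0\<close> to a point of the unit sphere is the sub-Finsler
  distance to that point, which is bounded on the sphere by an explicit Chow-type construction;
  hence its control \<open>u\<close> has bounded \<open>L\<^sup>1\<close> norm. The endpoint is \<open>(X 1, 1/2 \<integral> wedge X u)\<close>
  with \<open>X = \<integral> u\<close>. Projecting \<open>X\<close> and \<open>u\<close> orthogonally onto \<open>P\<close> gives a point of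
  \<open>P \<times> \<Lambda>\<^sup>2 P\<close>, and after an integration by parts every term of the difference of the two
  area integrals contains \<open>X - \<pi> X\<close>, which is \<open>O(\<epsilon>)\<close> by hypothesis. The distance is
  therefore \<open>O(\<epsilon> (1 + \<parallel>u\<parallel>\<^sub>1))\<close>.\<close>

section \<open>Integration by parts for indefinite integrals\<close>

lemma sigma_finite_measure_completion:
  assumes "sigma_finite_measure M"
  shows "sigma_finite_measure (completion M)"
proof -
  obtain A where A: "countable A" "A \<subseteq> sets M" "\<Union>A = space M" "\<forall>a\<in>A. emeasure M a \<noteq> \<infinity>"
    using sigma_finite_measure.sigma_finite_countable[OF assms] by blast
  show ?thesis
    unfolding sigma_finite_measure_def by (rule exI[of _ A]) (use A in auto)
qed

interpretation lebesgue_real: sigma_finite_measure "lebesgue :: real measure"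
  by (rule sigma_finite_measure_completion[OF sigma_finite_lborel])

interpretation lebesgue_real_pair: pair_sigma_finite "lebesgue :: real measure" "lebesgue :: real measure" ..

lemma borel_measurable_indicator_le_lebesgue_pair:
  "(\<lambda>x::real \<times> real. indicator {..snd x} (fst x) :: real) \<in> borel_measurable (lebesgue \<Otimes>\<^sub>M lebesgue)"
proof -
  let ?M = "lebesgue \<Otimes>\<^sub>M (lebesgue :: real measure)"
  have "(\<lambda>x::real \<times> real. fst x) \<in> borel_measurable ?M"
    by (rule measurable_compose[OF measurable_fst]) (rule measurable_completion, simp)
  moreover have "(\<lambda>x::real \<times> real. snd x) \<in> borel_measurable ?M"
    by (rule measurable_compose[OF measurable_snd]) (rule measurable_completion, simp)
  ultimately have "{x \<in> space ?M. fst x \<le> snd x} \<in> sets ?M"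
    by (rule borel_measurable_le)
  then have "(indicator {x. fst x \<le> snd x} :: _ \<Rightarrow> real) \<in> borel_measurable ?M"
    by (intro borel_measurable_indicator) (simp add: space_pair_measure)
  moreover have "(\<lambda>x. indicator {..snd x} (fst x) :: real) = indicator {x. fst x \<le> snd x}"
    by (auto simp: indicator_def fun_eq_iff)
  ultimately show ?thesis by metis
qed

lemma integrable_lebesgue_pair_product:
  fixes F G :: "real \<Rightarrow> real"
  assumes F: "integrable lebesgue F" and G: "integrable lebesgue G"
  shows "integrable (lebesgue \<Otimes>\<^sub>M lebesgue) (\<lambda>x. F (fst x) * G (snd x))"
proof (rule lebesgue_real_pair.Fubini_integrable)
  show "(\<lambda>x. F (fst x) * G (snd x)) \<in> borel_measurable (lebesgue \<Otimes>\<^sub>M lebesgue)"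
    using measurable_compose[OF measurable_fst borel_measurable_integrable[OF F]]
      measurable_compose[OF measurable_snd borel_measurable_integrable[OF G]]
    by measurable
  have "integrable lebesgue (\<lambda>x. \<bar>F x\<bar> * (\<integral>y. \<bar>G y\<bar> \<partial>lebesgue))"
    using F by (intro integrable_mult_left) auto
  then show "integrable lebesgue (\<lambda>x. \<integral>y. norm (F (fst (x, y)) * G (snd (x, y))) \<partial>lebesgue)"
    by (simp add: abs_mult)
  show "AE x in lebesgue. integrable lebesgue (\<lambda>y. F (fst (x, y)) * G (snd (x, y)))"
    using G by simp
qed

lemma integral_product_diagonal_split:
  fixes F G :: "real \<Rightarrow> real"
  assumes F: "integrable lebesgue F" and G: "integrable lebesgue G"
  shows "(\<integral>s. G s * (\<integral>r. F r * indicator {..s} r \<partial>lebesgue) \<partial>lebesgue)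
       + (\<integral>s. F s * (\<integral>r. G r * indicator {..<s} r \<partial>lebesgue) \<partial>lebesgue)
       = (\<integral>r. F r \<partial>lebesgue) * (\<integral>s. G s \<partial>lebesgue)"
proof -
  let ?M = "lebesgue \<Otimes>\<^sub>M (lebesgue :: real measure)"
  let ?H = "\<lambda>x. F (fst x) * G (snd x)"
  let ?T = "\<lambda>x. F (fst x) * G (snd x) * indicator {..snd x} (fst x)"
  note H = integrable_lebesgue_pair_product[OF F G]
  have T: "integrable ?M ?T"
    by (intro Bochner_Integration.integrable_bound[OF H])
      (use H borel_measurable_indicator_le_lebesgue_pair in \<open>auto simp: indicator_def\<close>)
  have "integral\<^sup>L ?M ?T = (\<integral>s. (\<integral>r. F r * G s * indicator {..s} r \<partial>lebesgue) \<partial>lebesgue)"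
    using lebesgue_real_pair.integral_snd[of "\<lambda>r s. F r * G s * indicator {..s} r"] T
    by (simp add: case_prod_beta')
  also have "\<dots> = (\<integral>s. G s * (\<integral>r. F r * indicator {..s} r \<partial>lebesgue) \<partial>lebesgue)"
    by (rule Bochner_Integration.integral_cong)
      (simp_all add: ac_simps flip: integral_mult_left_zero integral_mult_right_zero)
  finally have lower: "integral\<^sup>L ?M ?T = (\<integral>s. G s * (\<integral>r. F r * indicator {..s} r \<partial>lebesgue) \<partial>lebesgue)" .
  have upper_eq: "(\<lambda>x. ?H x - ?T x) = (\<lambda>x. F (fst x) * G (snd x) * indicator {..<fst x} (snd x))"
    by (auto simp: indicator_def fun_eq_iff)
  have "integral\<^sup>L ?M (\<lambda>x. ?H x - ?T x) = (\<integral>r. (\<integral>s. F r * G s * indicator {..<r} s \<partial>lebesgue) \<partial>lebesgue)"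
    using lebesgue_real_pair.integral_fst[of "\<lambda>r s. F r * G s * indicator {..<r} s"]
      Bochner_Integration.integrable_diff[OF H T]
    unfolding upper_eq by (simp add: case_prod_beta')
  also have "\<dots> = (\<integral>s. F s * (\<integral>r. G r * indicator {..<s} r \<partial>lebesgue) \<partial>lebesgue)"
    by (rule Bochner_Integration.integral_cong)
      (simp_all add: ac_simps flip: integral_mult_left_zero integral_mult_right_zero)
  finally have upper: "integral\<^sup>L ?M (\<lambda>x. ?H x - ?T x) = (\<integral>s. F s * (\<integral>r. G r * indicator {..<s} r \<partial>lebesgue) \<partial>lebesgue)" .
  have "integral\<^sup>L ?M ?H = (\<integral>r. F r \<partial>lebesgue) * (\<integral>s. G s \<partial>lebesgue)"
    using lebesgue_real_pair.integral_fst[of "\<lambda>r s. F r * G s"] H by (simp add: case_prod_beta')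
  moreover have "integral\<^sup>L ?M ?H = integral\<^sup>L ?M ?T + integral\<^sup>L ?M (\<lambda>x. ?H x - ?T x)"
    using H T by simp
  ultimately show ?thesis using lower upper by simp
qed

lemma lebesgue_integral_indicator_upto:
  fixes f :: "real \<Rightarrow> real"
  assumes f: "f absolutely_integrable_on {a..b}" and s: "s \<in> {a..b}"
  shows "(\<integral>r. (indicator {a..b} r * f r) * indicator {..s} r \<partial>lebesgue) = integral {a..s} f"
    and "(\<integral>r. (indicator {a..b} r * f r) * indicator {..<s} r \<partial>lebesgue) = integral {a..s} f"
proof -
  have "f absolutely_integrable_on {a..s}"
    by (rule set_integrable_subset[OF f]) (use s in auto)
  moreover have "(\<integral>r. (indicator {a..b} r * f r) * indicator {..s} r \<partial>lebesgue) = (LINT r:{a..s}|lebesgue. f r)"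
    unfolding set_lebesgue_integral_def
    by (rule Bochner_Integration.integral_cong) (use s in \<open>auto simp: indicator_def\<close>)
  ultimately show "(\<integral>r. (indicator {a..b} r * f r) * indicator {..s} r \<partial>lebesgue) = integral {a..s} f"
    by (simp add: set_lebesgue_integral_eq_integral(2))
  have "f absolutely_integrable_on {a..<s}"
    by (rule set_integrable_subset[OF f]) (use s in auto)
  moreover have "(\<integral>r. (indicator {a..b} r * f r) * indicator {..<s} r \<partial>lebesgue) = (LINT r:{a..<s}|lebesgue. f r)"
    unfolding set_lebesgue_integral_def
    by (rule Bochner_Integration.integral_cong) (use s in \<open>auto simp: indicator_def\<close>)
  moreover have "integral {a..<s} f = integral {a..s} f"
    by (rule integral_spike_set) (auto intro: negligible_subset[of "{s}"])
  ultimately show "(\<integral>r. (indicator {a..b} r * f r) * indicator {..<s} r \<partial>lebesgue) = integral {a..s} f"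
    by (simp add: set_lebesgue_integral_eq_integral(2))
qed

lemma absolutely_integrable_bilinear_continuous:
  fixes h :: "'a::euclidean_space \<Rightarrow> 'b::euclidean_space \<Rightarrow> 'c::euclidean_space"
  assumes h: "bilinear h" and g: "continuous_on {a..b} g" and f: "f absolutely_integrable_on {a..b::real}"
  shows "(\<lambda>s. h (g s) (f s)) absolutely_integrable_on {a..b}"
proof (rule absolutely_integrable_bounded_measurable_product[OF h])
  show "g \<in> borel_measurable (lebesgue_on {a..b})"
    by (rule continuous_imp_measurable_on_sets_lebesgue[OF g]) simp
  show "bounded (g ` {a..b})"
    by (rule compact_imp_bounded, rule compact_continuous_image[OF g]) simp
qed (use f in auto)

lemma continuous_on_indefinite_integral:
  fixes f :: "real \<Rightarrow> 'a::euclidean_space"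
  assumes "f absolutely_integrable_on {a..b}"
  shows "continuous_on {a..b} (\<lambda>s. integral {a..s} f)"
  by (rule indefinite_integral_continuous_1) (use assms in \<open>simp add: absolutely_integrable_on_def\<close>)

lemma absolutely_integrable_times_indefinite:
  fixes f g :: "real \<Rightarrow> real"
  assumes "f absolutely_integrable_on {a..b}" and "g absolutely_integrable_on {a..b}"
  shows "(\<lambda>s. g s * integral {a..s} f) absolutely_integrable_on {a..b}"
  using absolutely_integrable_bilinear_continuous[OF bilinear_times
      continuous_on_indefinite_integral[OF assms(1)] assms(2)]
  by (simp add: mult.commute)

lemma lebesgue_integral_times_indefinite:
  fixes f g :: "real \<Rightarrow> real"
  assumes f: "f absolutely_integrable_on {a..b}" and g: "g absolutely_integrable_on {a..b}"
    and A: "\<And>s. s \<in> {a..b} \<Longrightarrow> A s = integral {a..s} f"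
  shows "(\<integral>s. (indicator {a..b} s * g s) * A s \<partial>lebesgue) = integral {a..b} (\<lambda>s. g s * integral {a..s} f)"
proof -
  have "(\<integral>s. (indicator {a..b} s * g s) * A s \<partial>lebesgue) = (LINT s:{a..b}|lebesgue. g s * integral {a..s} f)"
    unfolding set_lebesgue_integral_def
    by (rule Bochner_Integration.integral_cong) (auto simp: indicator_def A)
  then show ?thesis
    using set_lebesgue_integral_eq_integral(2)[OF absolutely_integrable_times_indefinite[OF f g]]
    by simp
qed

lemma integral_by_parts_indefinite:
  fixes f g :: "real \<Rightarrow> real"
  assumes f: "f absolutely_integrable_on {a..b}" and g: "g absolutely_integrable_on {a..b}"
  shows "integral {a..b} (\<lambda>s. g s * integral {a..s} f) + integral {a..b} (\<lambda>s. f s * integral {a..s} g)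
       = integral {a..b} f * integral {a..b} g"
proof -
  define F where "F r = indicator {a..b} r * f r" for r :: real
  define G where "G r = indicator {a..b} r * g r" for r :: real
  have "integrable lebesgue F" "integrable lebesgue G"
    using f g unfolding F_def G_def set_integrable_def by simp_all
  note split = integral_product_diagonal_split[OF this]
  have "(\<integral>s. G s * (\<integral>r. F r * indicator {..s} r \<partial>lebesgue) \<partial>lebesgue)
      = integral {a..b} (\<lambda>s. g s * integral {a..s} f)"
    unfolding G_def
    by (rule lebesgue_integral_times_indefinite[OF f g])
      (simp add: F_def lebesgue_integral_indicator_upto(1)[OF f])
  moreover have "(\<integral>s. F s * (\<integral>r. G r * indicator {..<s} r \<partial>lebesgue) \<partial>lebesgue)
      = integral {a..b} (\<lambda>s. f s * integral {a..s} g)"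
    unfolding F_def
    by (rule lebesgue_integral_times_indefinite[OF g f])
      (simp add: G_def lebesgue_integral_indicator_upto(2)[OF g])
  moreover have "(\<integral>r. F r \<partial>lebesgue) = integral {a..b} f" "(\<integral>r. G r \<partial>lebesgue) = integral {a..b} g"
    using set_lebesgue_integral_eq_integral(2)[OF f] set_lebesgue_integral_eq_integral(2)[OF g]
    unfolding set_lebesgue_integral_def F_def G_def by simp_all
  ultimately show ?thesis
    using split by simp
qed

lemma wedge_nth [simp]: "wedge v w $ i $ j = v $ i * w $ j - w $ i * v $ j"
  by (simp add: wedge_def)

lemma bilinear_wedge: "bilinear (wedge :: real ^ 'n \<Rightarrow> real ^ 'n \<Rightarrow> real ^ 'n ^ 'n)"
  unfolding bilinear_def by (auto intro!: linearI simp: vec_eq_iff algebra_simps)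

lemma wedge_add_left: "wedge (a + b) c = wedge a c + wedge b c"
  and wedge_add_right: "wedge c (a + b) = wedge c a + wedge c b"
  and wedge_diff_left: "wedge (a - b) c = wedge a c - wedge b c"
  and wedge_diff_right: "wedge c (a - b) = wedge c a - wedge c b"
  and wedge_scaleR_left: "wedge (r *\<^sub>R a) c = r *\<^sub>R wedge a c"
  and wedge_scaleR_right: "wedge c (r *\<^sub>R a) = r *\<^sub>R wedge c a"
  and wedge_minus_left: "wedge (- a) c = - wedge a c"
  and wedge_minus_right: "wedge c (- a) = - wedge c a"
  and wedge_skew: "wedge c a = - wedge a c"
  by (simp_all add: vec_eq_iff algebra_simps)

lemma wedge_zero_left [simp]: "wedge 0 a = 0"
  and wedge_self [simp]: "wedge a a = 0"
  by (simp_all add: vec_eq_iff)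

lemma norm_vec_scaleR_components: "norm (\<chi> i. v $ i *\<^sub>R w) = norm (v :: real ^ 'n) * norm w"
  by (simp add: norm_vec_def L2_set_left_distrib)

lemma norm_wedge_le: "norm (wedge v w) \<le> 2 * norm v * norm w"
proof -
  have "wedge v w = (\<chi> i. v $ i *\<^sub>R w) - (\<chi> i. w $ i *\<^sub>R v)"
    by (simp add: vec_eq_iff)
  then have "norm (wedge v w) \<le> norm (\<chi> i. v $ i *\<^sub>R w) + norm (\<chi> i. w $ i *\<^sub>R v)"
    by (metis norm_triangle_ineq4)
  then show ?thesis by (simp add: norm_vec_scaleR_components)
qed

lemma integral_vec_nth_nth:
  fixes F :: "real \<Rightarrow> real ^ 'n ^ 'm"
  assumes "F integrable_on D"
  shows "integral D F $ i $ j = integral D (\<lambda>s. F s $ i $ j)"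
  using integral_linear[OF assms bounded_linear_compose[OF bounded_linear_vec_nth bounded_linear_vec_nth]]
  by (simp add: o_def)

lemma absolutely_integrable_bounded_linear_comp:
  fixes f :: "'a::euclidean_space \<Rightarrow> 'b::euclidean_space" and T :: "'b \<Rightarrow> 'c::euclidean_space"
  assumes "f absolutely_integrable_on S" and "bounded_linear T"
  shows "(\<lambda>s. T (f s)) absolutely_integrable_on S"
  using absolutely_integrable_linear[OF assms] by (simp add: o_def)

lemma integral_upto_bounded_linear:
  fixes u :: "real \<Rightarrow> 'a::euclidean_space" and T :: "'a \<Rightarrow> 'b::euclidean_space"
  assumes u: "u absolutely_integrable_on {a..b}" and T: "bounded_linear T" and s: "s \<le> b"
  shows "integral {a..s} (\<lambda>r. T (u r)) = T (integral {a..s} u)"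
proof -
  have "u absolutely_integrable_on {a..s}"
    by (rule set_integrable_subset[OF u]) (use s in auto)
  then have "u integrable_on {a..s}" using set_lebesgue_integral_eq_integral(1) by blast
  then show ?thesis using integral_linear[OF _ T] by (simp add: o_def)
qed

lemma absolutely_integrable_vec_nth:
  fixes f :: "real \<Rightarrow> real ^ 'n"
  shows "f absolutely_integrable_on S \<Longrightarrow> (\<lambda>s. f s $ i) absolutely_integrable_on S"
  by (rule absolutely_integrable_bounded_linear_comp[OF _ bounded_linear_vec_nth])

lemma integral_upto_vec_nth:
  fixes f :: "real \<Rightarrow> real ^ 'n"
  shows "f absolutely_integrable_on {a..b} \<Longrightarrow> s \<le> b \<Longrightarrow> integral {a..s} f $ i = integral {a..s} (\<lambda>r. f r $ i)"
  by (simp add: integral_upto_bounded_linear[OF _ bounded_linear_vec_nth])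

lemma integral_wedge_indefinite_nth:
  fixes \<alpha> \<beta> :: "real \<Rightarrow> real ^ 'n"
  assumes \<alpha>: "\<alpha> absolutely_integrable_on {a..b}" and \<beta>: "\<beta> absolutely_integrable_on {a..b}"
  shows "integral {a..b} (\<lambda>s. wedge (integral {a..s} \<alpha>) (\<beta> s)) $ i $ j
       = integral {a..b} (\<lambda>s. \<beta> s $ j * integral {a..s} (\<lambda>r. \<alpha> r $ i))
       - integral {a..b} (\<lambda>s. \<beta> s $ i * integral {a..s} (\<lambda>r. \<alpha> r $ j))"
proof -
  have "(\<lambda>s. wedge (integral {a..s} \<alpha>) (\<beta> s)) absolutely_integrable_on {a..b}"
    by (intro absolutely_integrable_bilinear_continuous[OF bilinear_wedge]
        continuous_on_indefinite_integral \<alpha> \<beta>)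
  then have int: "(\<lambda>s. wedge (integral {a..s} \<alpha>) (\<beta> s)) integrable_on {a..b}"
    using set_lebesgue_integral_eq_integral(1) by blast
  have "integral {a..b} (\<lambda>s. wedge (integral {a..s} \<alpha>) (\<beta> s)) $ i $ j
      = integral {a..b} (\<lambda>s. \<beta> s $ j * integral {a..s} (\<lambda>r. \<alpha> r $ i)
          - \<beta> s $ i * integral {a..s} (\<lambda>r. \<alpha> r $ j))"
    unfolding integral_vec_nth_nth[OF int]
    by (intro integral_cong) (simp add: integral_upto_vec_nth[OF \<alpha>] mult.commute)
  also have "\<dots> = integral {a..b} (\<lambda>s. \<beta> s $ j * integral {a..s} (\<lambda>r. \<alpha> r $ i))
       - integral {a..b} (\<lambda>s. \<beta> s $ i * integral {a..s} (\<lambda>r. \<alpha> r $ j))"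
    by (intro integral_diff absolutely_integrable_times_indefinite[THEN set_lebesgue_integral_eq_integral(1)]
        absolutely_integrable_vec_nth \<alpha> \<beta>)
  finally show ?thesis .
qed

lemma integral_wedge_by_parts:
  fixes \<alpha> \<beta> :: "real \<Rightarrow> real ^ 'n"
  assumes \<alpha>: "\<alpha> absolutely_integrable_on {a..b}" and \<beta>: "\<beta> absolutely_integrable_on {a..b}"
  shows "integral {a..b} (\<lambda>s. wedge (integral {a..s} \<alpha>) (\<beta> s))
       + integral {a..b} (\<lambda>s. wedge (\<alpha> s) (integral {a..s} \<beta>))
       = wedge (integral {a..b} \<alpha>) (integral {a..b} \<beta>)"
proof -
  have skew: "integral {a..b} (\<lambda>s. wedge (\<alpha> s) (integral {a..s} \<beta>))
      = - integral {a..b} (\<lambda>s. wedge (integral {a..s} \<beta>) (\<alpha> s))"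
    by (subst wedge_skew) simp
  have "(integral {a..b} (\<lambda>s. wedge (integral {a..s} \<alpha>) (\<beta> s))
        + integral {a..b} (\<lambda>s. wedge (\<alpha> s) (integral {a..s} \<beta>))) $ i $ j
      = wedge (integral {a..b} \<alpha>) (integral {a..b} \<beta>) $ i $ j" for i j
    using integral_by_parts_indefinite[OF absolutely_integrable_vec_nth[OF \<alpha>, of i] absolutely_integrable_vec_nth[OF \<beta>, of j]]
      integral_by_parts_indefinite[OF absolutely_integrable_vec_nth[OF \<alpha>, of j] absolutely_integrable_vec_nth[OF \<beta>, of i]]
    unfolding skew vector_add_component vector_uminus_component
      integral_wedge_indefinite_nth[OF \<alpha> \<beta>] integral_wedge_indefinite_nth[OF \<beta> \<alpha>]
    by (simp add: integral_upto_vec_nth[OF \<alpha> order_refl] integral_upto_vec_nth[OF \<beta> order_refl]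
        algebra_simps)
  then show ?thesis by (simp add: vec_eq_iff)
qed

section \<open>Orthogonal projection\<close>

definition orth_proj :: "'a::euclidean_space set \<Rightarrow> 'a \<Rightarrow> 'a" where
  "orth_proj S x = (SOME y. y \<in> span S \<and> (\<forall>w\<in>span S. orthogonal (x - y) w))"

lemma orth_proj_in_span: "orth_proj S x \<in> span S"
  and orthogonal_orth_proj: "w \<in> span S \<Longrightarrow> orthogonal (x - orth_proj S x) w"
proof -
  obtain y z where "y \<in> span S" "\<And>w. w \<in> span S \<Longrightarrow> orthogonal z w" "x = y + z"
    using orthogonal_subspace_decomp_exists[of S x] by blast
  then have "\<exists>y. y \<in> span S \<and> (\<forall>w\<in>span S. orthogonal (x - y) w)"
    by (metis add_diff_cancel_left')
  then have "orth_proj S x \<in> span S \<and> (\<forall>w\<in>span S. orthogonal (x - orth_proj S x) w)"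
    unfolding orth_proj_def by (rule someI_ex)
  then show "orth_proj S x \<in> span S" "w \<in> span S \<Longrightarrow> orthogonal (x - orth_proj S x) w"
    by blast+
qed

lemma orth_proj_unique:
  assumes "y \<in> span S" and "\<And>w. w \<in> span S \<Longrightarrow> orthogonal (x - y) w"
  shows "orth_proj S x = y"
proof -
  have d: "orth_proj S x - y \<in> span S"
    using assms(1) orth_proj_in_span by (rule span_diff[rotated])
  have "orthogonal ((x - y) - (x - orth_proj S x)) (orth_proj S x - y)"
    using assms(2)[OF d] orthogonal_orth_proj[OF d]
    by (simp add: orthogonal_def inner_diff_left)
  then show ?thesis by (simp add: orthogonal_self)
qed

lemma orth_proj_id: "x \<in> span S \<Longrightarrow> orth_proj S x = x"
  by (rule orth_proj_unique) (auto simp: orthogonal_def)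

lemma linear_orth_proj: "linear (orth_proj S)"
proof (rule linearI)
  fix x y
  have "orthogonal (x + y - (orth_proj S x + orth_proj S y)) w" if "w \<in> span S" for w
    using orthogonal_orth_proj[OF that, of x] orthogonal_orth_proj[OF that, of y]
    by (simp add: orthogonal_def algebra_simps inner_diff_left inner_add_left)
  then show "orth_proj S (x + y) = orth_proj S x + orth_proj S y"
    by (intro orth_proj_unique) (simp_all add: span_add orth_proj_in_span)
next
  fix c x
  have "orthogonal (c *\<^sub>R x - c *\<^sub>R orth_proj S x) w" if "w \<in> span S" for w
    using orthogonal_orth_proj[OF that, of x]
    by (simp add: orthogonal_def algebra_simps inner_diff_left)
  then show "orth_proj S (c *\<^sub>R x) = c *\<^sub>R orth_proj S x"
    by (intro orth_proj_unique) (simp_all add: span_mul orth_proj_in_span)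
qed

lemma norm_orth_proj_Pythagoras:
  "(norm x)\<^sup>2 = (norm (orth_proj S x))\<^sup>2 + (norm (x - orth_proj S x))\<^sup>2"
proof -
  have "orthogonal (orth_proj S x) (x - orth_proj S x)"
    using orthogonal_orth_proj[OF orth_proj_in_span] by (metis orthogonal_commute)
  then show ?thesis
    using norm_add_Pythagorean[of "orth_proj S x" "x - orth_proj S x"] by simp
qed

lemma norm_orth_proj_le: "norm (orth_proj S x) \<le> norm x"
  and norm_diff_orth_proj_le: "norm (x - orth_proj S x) \<le> norm x"
  using norm_orth_proj_Pythagoras[of x S]
  by (auto intro: power2_le_imp_le simp del: norm_minus_commute)

lemma orth_proj_nearest:
  assumes "y \<in> span S"
  shows "norm (x - orth_proj S x) \<le> norm (x - y)"
proof -
  have "orth_proj S (x - y) = orth_proj S x - y"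
    using linear_diff[OF linear_orth_proj] orth_proj_id[OF assms] by metis
  then have "x - orth_proj S x = (x - y) - orth_proj S (x - y)"
    by simp
  then show ?thesis by (metis norm_diff_orth_proj_le)
qed

lemma integral_in_subspace:
  fixes f :: "'b::euclidean_space \<Rightarrow> 'a::euclidean_space"
  assumes S: "subspace S" and f: "\<And>s. s \<in> D \<Longrightarrow> f s \<in> S"
  shows "integral D f \<in> S"
proof (cases "f integrable_on D")
  case True
  have "integral D f = integral D (orth_proj S \<circ> f)"
    by (rule integral_cong) (simp add: orth_proj_id span_base f)
  also have "\<dots> = orth_proj S (integral D f)"
    by (rule integral_linear[OF True linear_conv_bounded_linear[THEN iffD1, OF linear_orth_proj]])
  finally show ?thesis
    using orth_proj_in_span S by (metis span_eq_iff)
next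
  case False
  then show ?thesis using S by (simp add: not_integrable_integral subspace_0)
qed

lemma antisym_mat_iff: "antisym_mat Y \<longleftrightarrow> (\<forall>i j. Y $ i $ j + Y $ j $ i = 0)"
  unfolding antisym_mat_def by (metis add_eq_0_iff)

lemma subspace_antisym_mat: "subspace {Y :: real ^ 'n ^ 'n. antisym_mat Y}"
proof -
  have "linear (\<lambda>Y :: real ^ 'n ^ 'n. \<chi> i j. Y $ i $ j + Y $ j $ i)"
    by (auto intro!: linearI simp: vec_eq_iff algebra_simps)
  then have "subspace {Y :: real ^ 'n ^ 'n. (\<chi> i j. Y $ i $ j + Y $ j $ i) = 0}"
    by (rule linear_subspace_kernel)
  moreover have "{Y :: real ^ 'n ^ 'n. (\<chi> i j. Y $ i $ j + Y $ j $ i) = 0} = {Y. antisym_mat Y}"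
    by (auto simp: antisym_mat_iff vec_eq_iff)
  ultimately show ?thesis by simp
qed

lemma antisym_mat_wedge: "antisym_mat (wedge v w)"
  by (simp add: antisym_mat_def)

lemma antisym_mat_scaleR: "antisym_mat Y \<Longrightarrow> antisym_mat (c *\<^sub>R Y)"
  using subspace_mul[OF subspace_antisym_mat] by auto

lemma antisym_mat_diff: "antisym_mat Y \<Longrightarrow> antisym_mat Z \<Longrightarrow> antisym_mat (Y - Z)"
  using subspace_diff[OF subspace_antisym_mat] by auto

lemma span_wedges_antisym_mat:
  "span {wedge v w | v w. v \<in> P \<and> w \<in> P} \<subseteq> {Y. antisym_mat Y}"
  by (rule span_minimal) (auto simp: antisym_mat_wedge subspace_antisym_mat)

lemma carrierG_iff: "p \<in> carrierG \<longleftrightarrow> antisym_mat (snd p)"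
  by (simp add: carrierG_def)

lemma carrierG_diff: "p \<in> carrierG \<Longrightarrow> q \<in> carrierG \<Longrightarrow> p - q \<in> carrierG"
  by (simp add: carrierG_iff antisym_mat_diff)

lemma closed_carrierG: "closed (carrierG :: 'n::finite grp set)"
proof -
  have "carrierG = {p :: 'n grp. \<forall>i j. snd p $ i $ j = - (snd p $ j $ i)}"
    by (auto simp: carrierG_def antisym_mat_def)
  also have "closed \<dots>"
    by (intro closed_Collect_all closed_Collect_eq continuous_intros)
  finally show ?thesis .
qed

lemma hcurve_in_carrierG: "hcurve u t \<in> carrierG"
  unfolding carrierG_iff hcurve_def
  by (auto intro!: antisym_mat_scaleR integral_in_subspace[OF subspace_antisym_mat, simplified]
      antisym_mat_wedge)

lemma layer_sub_subset_carrierG: "layer_sub P \<subseteq> carrierG"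
  using span_wedges_antisym_mat[of P] by (auto simp: layer_sub_def carrierG_iff)

lemma gmul_zero_left [simp]: "gmul 0 p = p"
  by (simp add: gmul_def)

lemma is_normD:
  assumes "is_norm N"
  shows "N x \<ge> 0" "N x = 0 \<longleftrightarrow> x = 0" "N (c *\<^sub>R x) = \<bar>c\<bar> * N x" "N (x + y) \<le> N x + N y"
  using assms unfolding is_norm_def by blast+

lemma continuous_on_is_norm:
  assumes N: "is_norm N"
  shows "continuous_on UNIV N"
proof -
  have "convex_on UNIV N"
    unfolding convex_on_def
  proof (intro conjI ballI allI impI)
    fix x y and u v :: real
    assume "0 \<le> u" "0 \<le> v" "u + v = 1"
    have "N (u *\<^sub>R x + v *\<^sub>R y) \<le> N (u *\<^sub>R x) + N (v *\<^sub>R y)" by (rule is_normD(4)[OF N])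
    also have "\<dots> = u * N x + v * N y" using \<open>0 \<le> u\<close> \<open>0 \<le> v\<close> by (simp add: is_normD(3)[OF N])
    finally show "N (u *\<^sub>R x + v *\<^sub>R y) \<le> u * N x + v * N y" .
  qed simp
  then show ?thesis by (rule convex_on_continuous[OF open_UNIV])
qed

lemma homogeneous_lower_bound:
  fixes q :: "'a::euclidean_space \<Rightarrow> real"
  assumes cont: "continuous_on S q" and closed: "closed S" and cone: "\<And>c x. x \<in> S \<Longrightarrow> c *\<^sub>R x \<in> S"
    and hom: "\<And>c x. x \<in> S \<Longrightarrow> q (c *\<^sub>R x) = \<bar>c\<bar> ^ k * q x" and k: "0 < k"
    and pos: "\<And>x. x \<in> S \<Longrightarrow> x \<noteq> 0 \<Longrightarrow> 0 < q x"
  obtains c where "0 < c" "\<And>x. x \<in> S \<Longrightarrow> c * norm x ^ k \<le> q x"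
proof -
  let ?K = "S \<inter> sphere 0 1"
  obtain c where c: "0 < c" "\<And>y. y \<in> ?K \<Longrightarrow> c \<le> q y"
  proof (cases "?K = {}")
    case True
    show ?thesis by (rule that[of 1]) (use True in auto)
  next
    case False
    have "compact ?K" using closed by (intro closed_Int_compact) auto
    then obtain y0 where y0: "y0 \<in> ?K" "\<And>y. y \<in> ?K \<Longrightarrow> q y0 \<le> q y"
      using continuous_attains_inf[OF _ False continuous_on_subset[OF cont]] by blast
    have "y0 \<noteq> 0" using y0(1) by (intro notI) simp
    then have "0 < q y0" using pos y0(1) by blast
    then show ?thesis using that y0(2) by blast
  qed
  have "c * norm x ^ k \<le> q x" if x: "x \<in> S" for x
  proof (cases "x = 0")
    case True
    then show ?thesis using hom[OF x, of 0] k by (simp add: power_0_left)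
  next
    case False
    let ?y = "(1 / norm x) *\<^sub>R x"
    have y: "?y \<in> ?K" using cone[OF x] False by simp
    have "q x = norm x ^ k * q ?y"
      using hom[OF cone[OF x], of "norm x" "1 / norm x"] False by simp
    moreover have "c * norm x ^ k \<le> norm x ^ k * q ?y"
      using mult_left_mono[OF c(2)[OF y], of "norm x ^ k"] by (simp add: mult.commute)
    ultimately show ?thesis by simp
  qed
  with c(1) that show ?thesis by blast
qed

lemma is_norm_ge_norm:
  fixes N :: "real ^ 'n \<Rightarrow> real"
  assumes N: "is_norm N"
  obtains c where "0 < c" "\<And>x. c * norm x \<le> N x"
proof (rule homogeneous_lower_bound[of UNIV N 1])
  show "N (c *\<^sub>R x) = \<bar>c\<bar> ^ 1 * N x" for c x
    using is_normD(3)[OF N] by simp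
  show "0 < N x" if "x \<noteq> 0" for x
    using is_normD(1,2)[OF N, of x] that by linarith
qed (use continuous_on_is_norm[OF N] that in auto)

lemma is_norm_le_norm:
  fixes N :: "real ^ 'n \<Rightarrow> real"
  assumes N: "is_norm N"
  obtains C where "0 < C" "\<And>x. N x \<le> C * norm x"
proof -
  let ?K = "sphere (0 :: real ^ 'n) 1"
  obtain i :: 'n where True by blast
  then have "axis i 1 \<in> ?K" by simp
  then obtain y1 where y1: "y1 \<in> ?K" "\<And>y. y \<in> ?K \<Longrightarrow> N y \<le> N y1"
    using continuous_attains_sup[OF compact_sphere _ continuous_on_subset[OF continuous_on_is_norm[OF N]]]
    by blast
  have "N x \<le> N y1 * norm x" for x
  proof (cases "x = 0")
    case False
    have "N x = norm x * N ((1 / norm x) *\<^sub>R x)"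
      using is_normD(3)[OF N, of "norm x" "(1 / norm x) *\<^sub>R x"] False by simp
    also have "\<dots> \<le> norm x * N y1"
      using y1(2)[of "(1 / norm x) *\<^sub>R x"] False by (simp add: mult_left_mono)
    finally show ?thesis by (simp add: mult.commute)
  qed (use is_normD(2)[OF N, of 0] in simp)
  moreover have "0 < N y1" using y1(1) is_normD(1,2)[OF N, of y1] by force
  ultimately show ?thesis using that by blast
qed

lemma absolutely_integrable_is_norm_comp:
  fixes N :: "real ^ 'n \<Rightarrow> real"
  assumes N: "is_norm N" and u: "u absolutely_integrable_on {a..b::real}"
  shows "(\<lambda>s. N (u s)) absolutely_integrable_on {a..b}"
proof -
  obtain C where C: "0 < C" "\<And>x. N x \<le> C * norm x" using is_norm_le_norm[OF N] by blast
  show ?thesis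
  proof (rule measurable_bounded_by_integrable_imp_absolutely_integrable)
    have "u \<in> borel_measurable (lebesgue_on {a..b})"
      using u absolutely_integrable_measurable[of "{a..b}" u] by simp
    moreover have "N \<in> borel_measurable borel"
      by (rule borel_measurable_continuous_onI[OF continuous_on_is_norm[OF N]])
    ultimately show "(\<lambda>s. N (u s)) \<in> borel_measurable (lebesgue_on {a..b})"
      by (simp add: measurable_compose[where f = u])
    show "(\<lambda>s. C * norm (u s)) integrable_on {a..b}"
      using integrable_cmul[of "\<lambda>s. norm (u s)" "{a..b}" C] u by (simp add: absolutely_integrable_on_def)
    show "norm (N (u s)) \<le> C * norm (u s)" if "s \<in> {a..b}" for s
      using C(2)[of "u s"] is_normD(1)[OF N, of "u s"] by simp
  qed simp
qed

lemma sf_length_nonneg: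
  assumes N: "is_norm N"
  shows "0 \<le> sf_length N u"
  unfolding sf_length_def
  by (cases "(\<lambda>t. N (u t)) integrable_on {0..1}")
    (auto intro: integral_nonneg simp: is_normD(1)[OF N] not_integrable_integral)

lemma dcc_le_sf_length:
  assumes N: "is_norm N" and u: "admissible u"
  shows "dcc N 0 (hcurve u 1) \<le> sf_length N u"
  unfolding dcc_def
proof (rule cInf_lower)
  show "sf_length N u \<in> {sf_length N v |v. admissible v \<and> gmul 0 (hcurve v 1) = hcurve u 1}"
    using u by auto
  show "bdd_below {sf_length N v |v. admissible v \<and> gmul 0 (hcurve v 1) = hcurve u 1}"
    by (rule bdd_belowI[of _ 0]) (auto simp: sf_length_nonneg[OF N])
qed

lemma integral_norm_le_sf_length:
  fixes N :: "real ^ 'n \<Rightarrow> real"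
  assumes N: "is_norm N" and c: "\<And>x. c * norm x \<le> N x" and u: "admissible u"
  shows "c * integral {0..1} (\<lambda>s. norm (u s)) \<le> sf_length N u"
proof -
  have u': "u absolutely_integrable_on {0..1}" using u by (simp add: admissible_def)
  have "integral {0..1} (\<lambda>s. c * norm (u s)) \<le> integral {0..1} (\<lambda>s. N (u s))"
  proof (rule integral_le)
    show "(\<lambda>s. c * norm (u s)) integrable_on {0..1}"
      using integrable_cmul[of "\<lambda>s. norm (u s)" "{0..1}" c] u' by (simp add: absolutely_integrable_on_def)
    show "(\<lambda>s. N (u s)) integrable_on {0..1}"
      using absolutely_integrable_is_norm_comp[OF N u'] set_lebesgue_integral_eq_integral(1) by blast
  qed (use c in auto)
  then show ?thesis by (simp add: sf_length_def)
qed

lemma adequate_ip_bilinear: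
  assumes "adequate_ip ip"
  shows "bilinear ip"
proof -
  have "linear (\<lambda>p. ip p q)" for q
    using assms unfolding adequate_ip_def by blast
  moreover have "ip q = (\<lambda>p. ip p q)" for q
    using assms unfolding adequate_ip_def fun_eq_iff by blast
  ultimately show ?thesis unfolding bilinear_def by metis
qed

lemma adequate_ip_coercive:
  fixes ip :: "'n::finite grp \<Rightarrow> 'n grp \<Rightarrow> real"
  assumes A: "adequate_ip ip"
  obtains c where "0 < c" "\<And>p. p \<in> carrierG \<Longrightarrow> c * (norm p)\<^sup>2 \<le> ip p p"
proof (rule homogeneous_lower_bound[of carrierG "\<lambda>p. ip p p"])
  have bl: "bilinear ip" by (rule adequate_ip_bilinear[OF A])
  show "continuous_on carrierG (\<lambda>p. ip p p)"
    by (rule bilinear_continuous_on_compose[OF continuous_on_id continuous_on_id bl])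
  show "ip (c *\<^sub>R p) (c *\<^sub>R p) = \<bar>c\<bar>\<^sup>2 * ip p p" for c p
    using bilinear_lmul[OF bl] bilinear_rmul[OF bl] by (simp add: power2_eq_square)
  show "c *\<^sub>R p \<in> carrierG" if "p \<in> carrierG" for c p
    using that by (simp add: carrierG_iff antisym_mat_scaleR)
  show "0 < ip p p" if "p \<in> carrierG" "p \<noteq> 0" for p
    using A that unfolding adequate_ip_def by blast
qed (use closed_carrierG that in auto)

lemma hdist_eu_controls_orth_proj:
  fixes ip :: "'n::finite grp \<Rightarrow> 'n grp \<Rightarrow> real"
  assumes A: "adequate_ip ip"
  obtains c where "0 < c"
    "\<And>x P \<epsilon>. subspace P \<Longrightarrow> hdist_eu ip x P < \<epsilon> \<Longrightarrow> c * norm (x - orth_proj P x) < \<epsilon>"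
proof -
  obtain c where c: "0 < c" "\<And>p. p \<in> carrierG \<Longrightarrow> c * (norm p)\<^sup>2 \<le> ip p p"
    using adequate_ip_coercive[OF A] by blast
  have "sqrt c * norm (x - orth_proj P x) < \<epsilon>"
    if P: "subspace P" and dist: "hdist_eu ip x P < \<epsilon>" for x :: "real ^ 'n" and P \<epsilon>
  proof -
    have "{d_eu ip (x, 0) (y, 0) | y. y \<in> P} \<noteq> {}" using subspace_0[OF P] by blast
    then obtain y where y: "y \<in> P" "d_eu ip (x, 0) (y, 0) < \<epsilon>"
      using cInf_lessD[OF _ dist[unfolded hdist_eu_def]] by blast
    have "(x - y, 0 :: real ^ 'n ^ 'n) \<in> carrierG" by (simp add: carrierG_iff antisym_mat_def)
    then have "sqrt (c * (norm (x - y))\<^sup>2) \<le> d_eu ip (x, 0) (y, 0)"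
      using c(2) by (fastforce simp: d_eu_def norm_Pair)
    then have "sqrt c * norm (x - y) < \<epsilon>"
      using y(2) c(1) by (simp add: real_sqrt_mult)
    moreover have "norm (x - orth_proj P x) \<le> norm (x - y)"
      using orth_proj_nearest[of y P x] span_base[OF y(1)] by blast
    ultimately show ?thesis
      using c(1) by (smt (verit) mult_left_mono real_sqrt_ge_zero)
  qed
  then show ?thesis using that[of "sqrt c"] c(1) by auto
qed

lemma setdist_eu_layer_sub_le:
  fixes ip :: "'n::finite grp \<Rightarrow> 'n grp \<Rightarrow> real"
  assumes A: "adequate_ip ip"
  obtains C where "0 < C"
    "\<And>p q P. p \<in> carrierG \<Longrightarrow> q \<in> layer_sub P \<Longrightarrow> setdist_eu ip p (layer_sub P) \<le> C * norm (p - q)"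
proof -
  obtain c where c: "0 < c" "\<And>p. p \<in> carrierG \<Longrightarrow> c * (norm p)\<^sup>2 \<le> ip p p"
    using adequate_ip_coercive[OF A] by blast
  obtain C where C: "0 < C" "\<And>x y. norm (ip x y) \<le> C * norm x * norm y"
    using bilinear_bounded_pos[OF adequate_ip_bilinear[OF A]] by blast
  have "setdist_eu ip p (layer_sub P) \<le> sqrt C * norm (p - q)"
    if p: "p \<in> carrierG" and q: "q \<in> layer_sub P" for p q and P :: "(real ^ 'n) set"
  proof -
    have nonneg: "0 \<le> d_eu ip p q'" if "q' \<in> layer_sub P" for q'
      using c(1) c(2)[OF carrierG_diff[OF p]] layer_sub_subset_carrierG that
      by (smt (verit, best) d_eu_def real_sqrt_ge_zero subsetD zero_le_mult_iff zero_le_power2)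
    have "setdist_eu ip p (layer_sub P) \<le> d_eu ip p q"
      unfolding setdist_eu_def
    proof (rule cInf_lower)
      show "d_eu ip p q \<in> {d_eu ip p q |q. q \<in> layer_sub P}" using q by blast
      show "bdd_below {d_eu ip p q |q. q \<in> layer_sub P}"
        by (rule bdd_belowI[of _ 0]) (auto intro: nonneg)
    qed
    also have "\<dots> \<le> sqrt (C * (norm (p - q))\<^sup>2)"
      unfolding d_eu_def using C(2)[of "p - q" "p - q"]
      by (intro real_sqrt_le_mono) (simp add: power2_eq_square ac_simps)
    also have "\<dots> = sqrt C * norm (p - q)"
      using C(1) by (simp add: real_sqrt_mult)
    finally show ?thesis .
  qed
  then show ?thesis using that[of "sqrt C"] C(1) by auto
qed

section \<open>Controls reaching every point\<close>

definition step_control :: "nat \<Rightarrow> (nat \<Rightarrow> real ^ 'n) \<Rightarrow> real \<Rightarrow> real ^ 'n" where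
  "step_control m c s = real m *\<^sub>R c (nat \<lfloor>real m * s\<rfloor>)"

fun horizontal_product :: "(nat \<Rightarrow> real ^ 'n) \<Rightarrow> nat \<Rightarrow> 'n::finite grp" where
  "horizontal_product c 0 = (0, 0)"
| "horizontal_product c (Suc k) = gmul (horizontal_product c k) (c k, 0)"

lemma step_control_eq:
  assumes m: "0 < m" and s: "real k / real m \<le> s" "s < (real k + 1) / real m"
  shows "step_control m c s = real m *\<^sub>R c k"
proof -
  have "real k \<le> real m * s" "real m * s < real k + 1"
    using s m by (simp_all add: field_simps)
  then have "\<lfloor>real m * s\<rfloor> = int k" by (simp add: floor_eq_iff)
  then show ?thesis unfolding step_control_def by simp
qed

lemma has_integral_step_control_piece:
  assumes m: "0 < m" and s: "real k / real m \<le> s" "s \<le> (real k + 1) / real m"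
  shows "(step_control m c has_integral ((s - real k / real m) * real m) *\<^sub>R c k) {real k / real m..s}"
proof (rule has_integral_spike[where S = "{s}" and f = "\<lambda>_. real m *\<^sub>R c k"])
  show "step_control m c t = real m *\<^sub>R c k" if "t \<in> {real k / real m..s} - {s}" for t
    using that s by (intro step_control_eq[OF m]) auto
  show "((\<lambda>_. real m *\<^sub>R c k) has_integral ((s - real k / real m) * real m) *\<^sub>R c k) {real k / real m..s}"
    using has_integral_const_real[of "real m *\<^sub>R c k" "real k / real m" s] s(1) by simp
qed simp

lemma has_integral_step_control:
  assumes m: "0 < m"
  shows "(step_control m c has_integral fst (horizontal_product c k)) {0..real k / real m}"
proof (induction k)
  case 0
  then show ?case by (simp add: has_integral_refl(2))
next
  case (Suc k)
  have le: "0 \<le> real k / real m" "real k / real m \<le> (real k + 1) / real m"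
    using m by (simp_all add: divide_right_mono)
  have "(step_control m c has_integral fst (horizontal_product c k) + c k) {0..(real k + 1) / real m}"
    using has_integral_combine[OF le Suc.IH has_integral_step_control_piece[OF m le(2) order_refl]] m
    by (simp add: field_simps)
  then show ?case by (simp add: gmul_def add.commute)
qed

lemma integral_step_control_upto:
  assumes m: "0 < m" and s: "real k / real m \<le> s" "s \<le> (real k + 1) / real m"
  shows "integral {0..s} (step_control m c)
       = fst (horizontal_product c k) + ((s - real k / real m) * real m) *\<^sub>R c k"
proof (rule integral_unique)
  have "0 \<le> real k / real m" by simp
  then show "(step_control m c has_integral
      fst (horizontal_product c k) + ((s - real k / real m) * real m) *\<^sub>R c k) {0..s}"
    using has_integral_combine[OF _ s(1) has_integral_step_control[OF m]
        has_integral_step_control_piece[OF m s]] by simp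
qed

lemma has_integral_wedge_step_control:
  assumes m: "0 < m"
  shows "((\<lambda>s. wedge (integral {0..s} (step_control m c)) (step_control m c s))
      has_integral 2 *\<^sub>R snd (horizontal_product c k)) {0..real k / real m}"
proof (induction k)
  case 0
  then show ?case by (simp add: has_integral_refl(2))
next
  case (Suc k)
  define t0 t1 where "t0 = real k / real m" and "t1 = (real k + 1) / real m"
  have le: "0 \<le> t0" "t0 \<le> t1" using m by (simp_all add: t0_def t1_def divide_right_mono)
  have "((\<lambda>_. real m *\<^sub>R wedge (fst (horizontal_product c k)) (c k))
      has_integral wedge (fst (horizontal_product c k)) (c k)) {t0..t1}"
    using has_integral_const_real[of "real m *\<^sub>R wedge (fst (horizontal_product c k)) (c k)" t0 t1] m le
    by (simp add: t0_def t1_def field_simps)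
  then have "((\<lambda>s. wedge (integral {0..s} (step_control m c)) (step_control m c s))
      has_integral wedge (fst (horizontal_product c k)) (c k)) {t0..t1}"
  proof (rule has_integral_spike[where S = "{t1}", rotated 2])
    fix t assume t: "t \<in> {t0..t1} - {t1}"
    then have "step_control m c t = real m *\<^sub>R c k"
      "integral {0..t} (step_control m c) = fst (horizontal_product c k) + ((t - t0) * real m) *\<^sub>R c k"
      by (auto simp: t0_def t1_def intro!: step_control_eq[OF m] integral_step_control_upto[OF m])
    then show "wedge (integral {0..t} (step_control m c)) (step_control m c t)
        = real m *\<^sub>R wedge (fst (horizontal_product c k)) (c k)"
      by (simp add: wedge_add_left wedge_scaleR_left wedge_scaleR_right)
  qed simp
  then have "((\<lambda>s. wedge (integral {0..s} (step_control m c)) (step_control m c s))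
      has_integral 2 *\<^sub>R snd (horizontal_product c k) + wedge (fst (horizontal_product c k)) (c k)) {0..t1}"
    using has_integral_combine[OF le] Suc.IH by (simp add: t0_def)
  then show ?case by (simp add: t1_def gmul_def scaleR_add_right add.commute)
qed

lemma hcurve_step_control:
  assumes m: "0 < m"
  shows "hcurve (step_control m c) 1 = horizontal_product c m"
  using integral_unique[OF has_integral_step_control[OF m, of c m]]
    integral_unique[OF has_integral_wedge_step_control[OF m, of c m]] m
  by (simp add: hcurve_def prod_eq_iff)

lemma norm_step_control_le:
  assumes s: "s \<in> {0..1}"
  shows "norm (step_control m c s) \<le> real m * (\<Sum>j\<le>m. norm (c j))"
proof -
  have "real m * s \<le> real m" using s by (simp add: mult_left_le)
  then have "nat \<lfloor>real m * s\<rfloor> \<le> m" by (simp add: nat_le_iff floor_le_iff)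
  then have "norm (c (nat \<lfloor>real m * s\<rfloor>)) \<le> (\<Sum>j\<le>m. norm (c j))"
    by (intro member_le_sum) auto
  then show ?thesis unfolding step_control_def by (simp add: mult_left_mono)
qed

lemma admissible_step_control:
  assumes m: "0 < m"
  shows "admissible (step_control m c)"
proof -
  have "step_control m c integrable_on {0..1}"
    using has_integral_step_control[OF m, of c m] m by auto
  then show ?thesis
    unfolding admissible_def
    by (intro absolutely_integrable_integrable_bound[where g = "\<lambda>_. real m * (\<Sum>j\<le>m. norm (c j))"])
      (auto intro: norm_step_control_le)
qed

text \<open>The four steps \<open>e, w, -e, -w\<close> multiply to the commutator \<open>(0, wedge e w)\<close>. Taking for
  \<open>e\<close> the \<open>i\<close>-th basis vector and for \<open>w\<close> half the \<open>i\<close>-th row of \<open>Y\<close>, these commutators add up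
  to the antisymmetric \<open>Y\<close>, and a last step \<open>x\<close> reaches \<open>(x, Y)\<close>.\<close>

definition reaching_word :: "(nat \<Rightarrow> 'n) \<Rightarrow> real ^ 'n \<Rightarrow> real ^ 'n ^ 'n \<Rightarrow> nat \<Rightarrow> real ^ 'n::finite" where
  "reaching_word h x Y j =
    (if j < 4 * CARD('n) then
      (let e = axis (h (j div 4)) 1; w = (1/2) *\<^sub>R Y $ h (j div 4) in [e, w, - e, - w] ! (j mod 4))
     else x)"

lemma horizontal_product_reaching_word_blocks:
  "k \<le> CARD('n) \<Longrightarrow> horizontal_product (reaching_word h x Y) (4 * k)
     = (0, \<Sum>i<k. wedge (axis (h i) 1) ((1/2) *\<^sub>R Y $ h i :: real ^ 'n::finite))"
proof (induction k)
  case 0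
  then show ?case by simp
next
  case (Suc k)
  let ?c = "reaching_word h x Y" and ?e = "axis (h k) 1 :: real ^ 'n" and ?w = "(1/2) *\<^sub>R Y $ h k"
  have k: "4 * k + 3 < 4 * CARD('n)" using Suc.prems by simp
  have "4 * k div 4 = k" "Suc (4 * k) div 4 = k" "Suc (Suc (4 * k)) div 4 = k"
    "Suc (Suc (Suc (4 * k))) div 4 = k" "4 * k mod 4 = 0" "Suc (4 * k) mod 4 = Suc 0"
    "Suc (Suc (4 * k)) mod 4 = Suc (Suc 0)" "Suc (Suc (Suc (4 * k))) mod 4 = Suc (Suc (Suc 0))"
    by presburger+
  with k have c: "?c (4 * k) = ?e" "?c (Suc (4 * k)) = ?w" "?c (Suc (Suc (4 * k))) = - ?e"
    "?c (Suc (Suc (Suc (4 * k)))) = - ?w"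
    by (simp_all add: reaching_word_def Let_def)
  have IH: "horizontal_product ?c (4 * k) = (0, \<Sum>i<k. wedge (axis (h i) 1) ((1/2) *\<^sub>R Y $ h i))"
    using Suc by simp
  have four: "4 * Suc k = Suc (Suc (Suc (Suc (4 * k))))" by simp
  show ?case
    unfolding four horizontal_product.simps c IH
    by (simp add: gmul_def wedge_add_left wedge_add_right wedge_minus_left wedge_minus_right
        wedge_scaleR_left wedge_scaleR_right algebra_simps wedge_skew[of "Y $ h k" "axis (h k) 1"])
qed

lemma sum_wedge_axis_half_rows:
  fixes Y :: "real ^ 'n ^ 'n"
  assumes "antisym_mat Y"
  shows "(\<Sum>i\<in>UNIV. wedge (axis i 1) ((1/2) *\<^sub>R Y $ i)) = Y"
proof -
  have axis_sum: "(\<Sum>i\<in>UNIV. (axis i 1 :: real ^ 'n) $ k * f i) = f k" for k and f :: "'n \<Rightarrow> real"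
  proof -
    have "(\<Sum>i\<in>UNIV. (axis i 1 :: real ^ 'n) $ k * f i) = (\<Sum>i\<in>UNIV. if i = k then f i else 0)"
      by (rule sum.cong) (auto simp: axis_def)
    then show ?thesis by simp
  qed
  have "(\<Sum>i\<in>UNIV. wedge (axis i 1) ((1/2) *\<^sub>R Y $ i)) $ k $ l = Y $ k $ l" for k l
  proof -
    have "(\<Sum>i\<in>UNIV. wedge (axis i 1) ((1/2) *\<^sub>R Y $ i)) $ k $ l
        = (\<Sum>i\<in>UNIV. axis i 1 $ k * ((1/2) * Y $ i $ l)) - (\<Sum>i\<in>UNIV. axis i 1 $ l * ((1/2) * Y $ i $ k))"
      by (simp add: sum_subtractf mult.commute)
    also have "\<dots> = (1/2) * Y $ k $ l - (1/2) * Y $ l $ k"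
      by (simp only: axis_sum)
    also have "\<dots> = Y $ k $ l"
    proof -
      have "Y $ l $ k = - Y $ k $ l" using assms unfolding antisym_mat_def by blast
      then show ?thesis by simp
    qed
    finally show ?thesis .
  qed
  then show ?thesis by (simp add: vec_eq_iff)
qed

lemma horizontal_product_reaching_word:
  fixes Y :: "real ^ 'n ^ 'n"
  assumes h: "bij_betw h {..<CARD('n)} (UNIV :: 'n set)" and Y: "antisym_mat Y"
  shows "horizontal_product (reaching_word h x Y) (4 * CARD('n) + 1) = (x, Y)"
proof -
  have "horizontal_product (reaching_word h x Y) (4 * CARD('n))
      = (0, \<Sum>i<CARD('n). wedge (axis (h i) 1) ((1/2) *\<^sub>R Y $ h i))"
    by (rule horizontal_product_reaching_word_blocks) simp
  also have "(\<Sum>i<CARD('n). wedge (axis (h i) 1) ((1/2) *\<^sub>R Y $ h i)) = Y"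
    using sum.reindex_bij_betw[OF h, of "\<lambda>i. wedge (axis i 1) ((1/2) *\<^sub>R Y $ i)"]
      sum_wedge_axis_half_rows[OF Y] by simp
  finally have "horizontal_product (reaching_word h x Y) (4 * CARD('n)) = (0, Y)" .
  moreover have "reaching_word h x Y (4 * CARD('n)) = x"
    by (simp add: reaching_word_def)
  moreover have "4 * CARD('n) + 1 = Suc (4 * CARD('n))" by simp
  ultimately show ?thesis by (simp add: gmul_def)
qed

lemma norm_reaching_word_le:
  fixes x :: "real ^ 'n::finite"
  shows "norm (reaching_word h x Y j) \<le> 1 + norm x + norm Y"
proof (cases "j < 4 * CARD('n)")
  case True
  let ?e = "axis (h (j div 4)) 1 :: real ^ 'n" and ?w = "(1/2) *\<^sub>R Y $ h (j div 4)"
  have "norm ?w = norm (Y $ h (j div 4)) / 2" by simp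
  then have "norm ?w \<le> norm Y"
    using Finite_Cartesian_Product.norm_nth_le[of Y "h (j div 4)"] norm_ge_zero[of Y] by linarith
  moreover have "[?e, ?w, - ?e, - ?w] ! (j mod 4) \<in> set [?e, ?w, - ?e, - ?w]"
    by (rule nth_mem) simp
  ultimately have "norm (reaching_word h x Y j) \<le> max 1 (norm Y)"
    using True by (auto simp: reaching_word_def Let_def le_max_iff_disj)
  then show ?thesis by (smt (verit) norm_ge_zero)
next
  case False
  then show ?thesis by (simp add: reaching_word_def)
qed

lemma exists_control_reaching:
  fixes N :: "real ^ 'n \<Rightarrow> real" and Y :: "real ^ 'n ^ 'n"
  assumes N: "is_norm N" and C: "0 < C" "\<And>z. N z \<le> C * norm z" and Y: "antisym_mat Y"
  obtains u where "admissible u" "hcurve u 1 = (x, Y)"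
    "sf_length N u \<le> C * (real (4 * CARD('n) + 1) * (real (4 * CARD('n) + 2) * (1 + norm x + norm Y)))"
proof -
  obtain h where h: "bij_betw h {..<CARD('n)} (UNIV :: 'n set)"
    using ex_bij_betw_nat_finite[of "UNIV :: 'n set"] by (auto simp: lessThan_atLeast0)
  define m where "m = 4 * CARD('n) + 1"
  have m: "0 < m" by (simp add: m_def)
  let ?u = "step_control m (reaching_word h x Y)"
  let ?B = "C * (real m * (real (m + 1) * (1 + norm x + norm Y)))"
  have adm: "admissible ?u" by (rule admissible_step_control[OF m])
  have "(\<Sum>j\<le>m. norm (reaching_word h x Y j)) \<le> real (m + 1) * (1 + norm x + norm Y)"
    using sum_bounded_above[of "{..m}" "\<lambda>j. norm (reaching_word h x Y j)", OF norm_reaching_word_le]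
    by simp
  then have bound: "N (?u s) \<le> ?B" if "s \<in> {0..1}" for s
    using C(2)[of "?u s"] norm_step_control_le[OF that, of m "reaching_word h x Y"] C(1)
    by (smt (verit) mult_left_mono of_nat_0_le_iff)
  have "sf_length N ?u \<le> integral {0..1} (\<lambda>_::real. ?B)"
    unfolding sf_length_def
  proof (rule integral_le)
    show "(\<lambda>s. N (?u s)) integrable_on {0..1}"
      using absolutely_integrable_is_norm_comp[OF N adm[unfolded admissible_def]]
        set_lebesgue_integral_eq_integral(1) by blast
  qed (use bound in auto)
  moreover have "hcurve ?u 1 = (x, Y)"
    using hcurve_step_control[OF m, of "reaching_word h x Y"] horizontal_product_reaching_word[OF h Y, of x]
    unfolding m_def by (simp only:)
  ultimately show ?thesis
    using that adm by (simp add: m_def)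
qed

lemma dcc_bounded_on_unit_sphere:
  fixes N :: "real ^ 'n \<Rightarrow> real" and ip :: "'n::finite grp \<Rightarrow> 'n grp \<Rightarrow> real"
  assumes N: "is_norm N" and A: "adequate_ip ip"
  obtains D where "\<And>g. g \<in> carrierG \<Longrightarrow> ip g g = 1 \<Longrightarrow> dcc N 0 g \<le> D"
proof -
  obtain C where C: "0 < C" "\<And>z. N z \<le> C * norm z" using is_norm_le_norm[OF N] by blast
  obtain c where c: "0 < c" "\<And>p. p \<in> carrierG \<Longrightarrow> c * (norm p)\<^sup>2 \<le> ip p p"
    using adequate_ip_coercive[OF A] by blast
  define R where "R = 1 + 1 / c"
  let ?D = "C * (real (4 * CARD('n) + 1) * (real (4 * CARD('n) + 2) * (1 + R + R)))"
  have "dcc N 0 g \<le> ?D" if g: "g \<in> carrierG" "ip g g = 1" for g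
  proof -
    obtain x Y where xY: "g = (x, Y)" by (cases g)
    have Y: "antisym_mat Y" using g(1) xY by (simp add: carrierG_iff)
    have "c * (norm g)\<^sup>2 \<le> 1" using c(2)[OF g(1)] g(2) by simp
    then have "(norm g)\<^sup>2 \<le> 1 / c" using c(1) by (simp add: field_simps)
    moreover have "(norm g - 1)\<^sup>2 = (norm g)\<^sup>2 - 2 * norm g + 1" by (simp add: power2_diff)
    moreover have "0 \<le> (norm g - 1)\<^sup>2" "0 \<le> (norm g)\<^sup>2" by simp_all
    ultimately have "norm g \<le> R" unfolding R_def by linarith
    then have xR: "norm x \<le> R" and YR: "norm Y \<le> R"
      using norm_fst_le[of x Y] norm_snd_le[of Y x] xY by simp_all
    obtain u where u: "admissible u" "hcurve u 1 = (x, Y)"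
      "sf_length N u \<le> C * (real (4 * CARD('n) + 1) * (real (4 * CARD('n) + 2) * (1 + norm x + norm Y)))"
      using exists_control_reaching[OF N C Y] by blast
    have "dcc N 0 g \<le> sf_length N u" using dcc_le_sf_length[OF N u(1)] u(2) xY by simp
    also have "\<dots> \<le> ?D"
      using u(3) xR YR C(1) by (smt (verit, best) mult_left_mono of_nat_0_le_iff zero_le_mult_iff)
    finally show ?thesis .
  qed
  then show ?thesis using that by blast
qed

lemma geodesic_control_bounded:
  fixes N :: "real ^ 'n \<Rightarrow> real" and ip :: "'n::finite grp \<Rightarrow> 'n grp \<Rightarrow> real"
  assumes N: "is_norm N" and A: "adequate_ip ip"
  obtains L where "\<And>\<gamma>. is_geodesic N 0 (\<gamma> 1) \<gamma> \<Longrightarrow> d_eu ip (\<gamma> 1) 0 = 1 \<Longrightarrow>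
      \<exists>u. admissible u \<and> (\<forall>t\<in>{0..1}. \<gamma> t = hcurve u t) \<and> integral {0..1} (\<lambda>s. norm (u s)) \<le> L"
proof -
  obtain D where D: "\<And>g. g \<in> carrierG \<Longrightarrow> ip g g = 1 \<Longrightarrow> dcc N 0 g \<le> D"
    using dcc_bounded_on_unit_sphere[OF N A] by blast
  obtain c where c: "0 < c" "\<And>x. c * norm x \<le> N x" using is_norm_ge_norm[OF N] by blast
  have "\<exists>u. admissible u \<and> (\<forall>t\<in>{0..1}. \<gamma> t = hcurve u t) \<and> integral {0..1} (\<lambda>s. norm (u s)) \<le> D / c"
    if geo: "is_geodesic N 0 (\<gamma> 1) \<gamma>" and unit: "d_eu ip (\<gamma> 1) 0 = 1" for \<gamma>
  proof -
    obtain u where u: "admissible u" "\<And>t. t \<in> {0..1} \<Longrightarrow> \<gamma> t = hcurve u t"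
      "sf_length N u = dcc N 0 (\<gamma> 1)"
      using geo unfolding is_geodesic_def by auto
    have "\<gamma> 1 = hcurve u 1" using u(2)[of 1] by simp
    moreover have "ip (\<gamma> 1) (\<gamma> 1) = 1" using unit by (simp add: d_eu_def)
    ultimately have "sf_length N u \<le> D" using D hcurve_in_carrierG u(3) by metis
    then have "c * integral {0..1} (\<lambda>s. norm (u s)) \<le> D"
      using integral_norm_le_sf_length[OF N c(2) u(1)] by linarith
    then show ?thesis using u(1,2) c(1) by (auto simp: field_simps)
  qed
  then show ?thesis using that by blast
qed

section \<open>Distance of the endpoint to \<open>P \<times> \<Lambda>\<^sup>2 P\<close>\<close>

lemma absolutely_integrable_wedge_indefinite:
  fixes u :: "real \<Rightarrow> real ^ 'n" and T :: "real ^ 'n \<Rightarrow> real ^ 'n"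
  assumes u: "u absolutely_integrable_on {a..b}" and T: "bounded_linear T"
    and f: "f absolutely_integrable_on {a..b}"
  shows "(\<lambda>s. wedge (T (integral {a..s} u)) (f s)) absolutely_integrable_on {a..b}"
proof -
  have "continuous_on {a..b} (\<lambda>s. T (integral {a..s} u))"
    using continuous_on_compose[OF continuous_on_indefinite_integral[OF u] linear_continuous_on[OF T]]
    by (simp add: o_def)
  then show ?thesis by (rule absolutely_integrable_bilinear_continuous[OF bilinear_wedge _ f])
qed

lemma integral_wedge_by_parts_linear:
  fixes u :: "real \<Rightarrow> real ^ 'n" and L M :: "real ^ 'n \<Rightarrow> real ^ 'n"
  assumes u: "u absolutely_integrable_on {a..b}" and L: "bounded_linear L" and M: "bounded_linear M"
  shows "integral {a..b} (\<lambda>s. wedge (L (integral {a..s} u)) (M (u s)))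
       = wedge (L (integral {a..b} u)) (M (integral {a..b} u))
       + integral {a..b} (\<lambda>s. wedge (M (integral {a..s} u)) (L (u s)))"
proof -
  note Lu = absolutely_integrable_bounded_linear_comp[OF u L]
    and Mu = absolutely_integrable_bounded_linear_comp[OF u M]
  have "integral {a..b} (\<lambda>s. wedge (integral {a..s} (\<lambda>r. L (u r))) (M (u s)))
      = integral {a..b} (\<lambda>s. wedge (L (integral {a..s} u)) (M (u s)))"
    by (rule integral_cong) (simp add: integral_upto_bounded_linear[OF u L])
  moreover have "integral {a..b} (\<lambda>s. wedge (L (u s)) (integral {a..s} (\<lambda>r. M (u r))))
      = - integral {a..b} (\<lambda>s. wedge (M (integral {a..s} u)) (L (u s)))"
    by (subst integral_neg[symmetric], rule integral_cong)
      (simp add: integral_upto_bounded_linear[OF u M] wedge_skew[of "L _"])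
  ultimately show ?thesis
    using integral_wedge_by_parts[OF Lu Mu]
    by (simp add: integral_upto_bounded_linear[OF u L order_refl]
        integral_upto_bounded_linear[OF u M order_refl] algebra_simps)
qed

text \<open>Write \<open>X = L X + (X - L X)\<close> and integrate the mixed term \<open>wedge (L X) (u - L u)\<close> by parts.\<close>

lemma integral_wedge_split:
  fixes u :: "real \<Rightarrow> real ^ 'n" and L :: "real ^ 'n \<Rightarrow> real ^ 'n"
  assumes u: "u absolutely_integrable_on {a..b}" and L: "bounded_linear L"
  defines "X \<equiv> \<lambda>s. integral {a..s} u"
  shows "integral {a..b} (\<lambda>s. wedge (X s) (u s))
       = integral {a..b} (\<lambda>s. wedge (L (X s)) (L (u s)))
       + wedge (L (X b)) (X b - L (X b))
       + integral {a..b} (\<lambda>s. wedge (X s - L (X s)) (L (u s)))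
       + integral {a..b} (\<lambda>s. wedge (X s - L (X s)) (u s))"
proof -
  define Q where "Q x = x - L x" for x
  have Q: "bounded_linear Q" unfolding Q_def by (intro bounded_linear_sub bounded_linear_ident L)
  have int: "(\<lambda>s. wedge (T (X s)) (f s)) integrable_on {a..b}"
    if "bounded_linear T" "f absolutely_integrable_on {a..b}" for T :: "real ^ 'n \<Rightarrow> real ^ 'n" and f
    using absolutely_integrable_wedge_indefinite[OF u that] set_lebesgue_integral_eq_integral(1)
    unfolding X_def by blast
  have iLL: "(\<lambda>s. wedge (L (X s)) (L (u s))) integrable_on {a..b}"
    and iLQ: "(\<lambda>s. wedge (L (X s)) (Q (u s))) integrable_on {a..b}"
    and iQ: "(\<lambda>s. wedge (Q (X s)) (u s)) integrable_on {a..b}"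
    by (intro int L Q u absolutely_integrable_bounded_linear_comp[OF u])+
  have "integral {a..b} (\<lambda>s. wedge (X s) (u s))
      = integral {a..b} (\<lambda>s. (wedge (L (X s)) (L (u s)) + wedge (L (X s)) (Q (u s))) + wedge (Q (X s)) (u s))"
    by (rule integral_cong) (simp add: Q_def wedge_diff_left wedge_diff_right)
  also have "\<dots> = integral {a..b} (\<lambda>s. wedge (L (X s)) (L (u s)))
      + integral {a..b} (\<lambda>s. wedge (L (X s)) (Q (u s))) + integral {a..b} (\<lambda>s. wedge (Q (X s)) (u s))"
    by (simp add: integral_add[OF integrable_add[OF iLL iLQ] iQ] integral_add[OF iLL iLQ])
  finally show ?thesis
    using integral_wedge_by_parts_linear[OF u L Q] by (simp add: X_def Q_def)
qed

lemma norm_integral_wedge_le: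
  fixes g f :: "real \<Rightarrow> real ^ 'n"
  assumes g: "continuous_on {a..b} g" and f: "f absolutely_integrable_on {a..b}"
    and h: "h integrable_on {a..b}"
    and g_le: "\<And>s. s \<in> {a..b} \<Longrightarrow> norm (g s) \<le> \<delta>" and f_le: "\<And>s. s \<in> {a..b} \<Longrightarrow> norm (f s) \<le> h s"
  shows "norm (integral {a..b} (\<lambda>s. wedge (g s) (f s))) \<le> 2 * \<delta> * integral {a..b} h"
proof -
  have "norm (integral {a..b} (\<lambda>s. wedge (g s) (f s))) \<le> integral {a..b} (\<lambda>s. 2 * \<delta> * h s)"
  proof (rule integral_norm_bound_integral)
    show "(\<lambda>s. wedge (g s) (f s)) integrable_on {a..b}"
      using absolutely_integrable_bilinear_continuous[OF bilinear_wedge g f]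
        set_lebesgue_integral_eq_integral(1) by blast
    show "(\<lambda>s. 2 * \<delta> * h s) integrable_on {a..b}"
      using integrable_cmul[OF h, of "2 * \<delta>"] by simp
    fix s assume s: "s \<in> {a..b}"
    have "norm (wedge (g s) (f s)) \<le> 2 * norm (g s) * norm (f s)"
      by (rule norm_wedge_le)
    also have "\<dots> \<le> 2 * \<delta> * h s"
      using g_le[OF s] f_le[OF s] order_trans[OF norm_ge_zero g_le[OF s]]
      by (intro mult_mono mult_left_mono) auto
    finally show "norm (wedge (g s) (f s)) \<le> 2 * \<delta> * h s" .
  qed
  then show ?thesis by simp
qed

lemma norm_integral_wedge_split_le:
  fixes u :: "real \<Rightarrow> real ^ 'n" and L :: "real ^ 'n \<Rightarrow> real ^ 'n"
  assumes u: "u absolutely_integrable_on {a..b}" and ab: "a \<le> b"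
    and L: "bounded_linear L" and contr: "\<And>x. norm (L x) \<le> norm x"
    and near: "\<And>s. s \<in> {a..b} \<Longrightarrow> norm (integral {a..s} u - L (integral {a..s} u)) \<le> \<delta>"
  shows "norm (integral {a..b} (\<lambda>s. wedge (integral {a..s} u) (u s))
      - integral {a..b} (\<lambda>s. wedge (L (integral {a..s} u)) (L (u s))))
    \<le> 6 * \<delta> * integral {a..b} (\<lambda>s. norm (u s))"
proof -
  define X where "X s = integral {a..s} u" for s
  define U where "U = integral {a..b} (\<lambda>s. norm (u s))"
  have near': "norm (X s - L (X s)) \<le> \<delta>" if "s \<in> {a..b}" for s
    using near[OF that] by (simp add: X_def)
  have nu: "(\<lambda>s. norm (u s)) integrable_on {a..b}" using u by (simp add: absolutely_integrable_on_def)
  have "norm (X b) \<le> U"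
    unfolding X_def U_def
    by (rule integral_norm_bound_integral) (use u nu in \<open>auto simp: absolutely_integrable_on_def\<close>)
  then have LXb: "norm (L (X b)) \<le> U" using contr order_trans by blast
  have "norm (wedge (L (X b)) (X b - L (X b))) \<le> 2 * norm (L (X b)) * norm (X b - L (X b))"
    by (rule norm_wedge_le)
  also have "\<dots> \<le> 2 * (U * \<delta>)"
    using mult_mono[OF LXb near'[of b]] ab order_trans[OF norm_ge_zero LXb] by (simp add: mult.assoc)
  finally have T1: "norm (wedge (L (X b)) (X b - L (X b))) \<le> 2 * \<delta> * U" by (simp add: ac_simps)
  have "continuous_on {a..b} (\<lambda>s. X s - L (X s))"
    using continuous_on_compose[OF continuous_on_indefinite_integral[OF u]
        linear_continuous_on[OF bounded_linear_sub[OF bounded_linear_ident L]]]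
    by (simp add: o_def X_def)
  note T = norm_integral_wedge_le[OF this _ nu near']
  have T2: "norm (integral {a..b} (\<lambda>s. wedge (X s - L (X s)) (L (u s)))) \<le> 2 * \<delta> * U"
    unfolding U_def by (rule T) (use absolutely_integrable_bounded_linear_comp[OF u L] contr in auto)
  have T3: "norm (integral {a..b} (\<lambda>s. wedge (X s - L (X s)) (u s))) \<le> 2 * \<delta> * U"
    unfolding U_def by (rule T) (use u in auto)
  let ?t1 = "wedge (L (X b)) (X b - L (X b))"
    and ?t2 = "integral {a..b} (\<lambda>s. wedge (X s - L (X s)) (L (u s)))"
    and ?t3 = "integral {a..b} (\<lambda>s. wedge (X s - L (X s)) (u s))"
  have "integral {a..b} (\<lambda>s. wedge (X s) (u s)) - integral {a..b} (\<lambda>s. wedge (L (X s)) (L (u s)))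
      = ?t1 + ?t2 + ?t3"
    using integral_wedge_split[OF u L] unfolding X_def by simp
  then have "norm (integral {a..b} (\<lambda>s. wedge (X s) (u s)) - integral {a..b} (\<lambda>s. wedge (L (X s)) (L (u s))))
      = norm (?t1 + ?t2 + ?t3)" by simp
  also have "\<dots> \<le> norm ?t1 + norm ?t2 + norm ?t3"
    using norm_triangle_ineq[of "?t1 + ?t2" ?t3] norm_triangle_ineq[of ?t1 ?t2] by linarith
  also have "\<dots> \<le> 6 * \<delta> * U" using T1 T2 T3 by linarith
  finally show ?thesis by (simp add: X_def U_def)
qed

lemma hcurve_near_layer_sub:
  fixes u :: "real \<Rightarrow> real ^ 'n"
  assumes u: "admissible u" and P: "subspace P"
    and near: "\<And>s. s \<in> {0..1} \<Longrightarrow> norm (integral {0..s} u - orth_proj P (integral {0..s} u)) \<le> \<delta>"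
  obtains q where "q \<in> layer_sub P" "norm (hcurve u 1 - q) \<le> \<delta> * (1 + 3 * integral {0..1} (\<lambda>s. norm (u s)))"
proof -
  let ?X = "\<lambda>s. integral {0..s} u" and ?\<pi> = "orth_proj P"
  define Z where "Z = integral {0..1} (\<lambda>s. wedge (?\<pi> (?X s)) (?\<pi> (u s)))"
  define q where "q = (?\<pi> (?X 1), (1/2) *\<^sub>R Z)"
  have \<pi>P: "?\<pi> x \<in> P" for x
    using orth_proj_in_span[of P x] span_eq_iff[THEN iffD2, OF P] by simp
  have "Z \<in> span {wedge v w | v w. v \<in> P \<and> w \<in> P}"
    unfolding Z_def
    by (rule integral_in_subspace[OF subspace_span]) (use \<pi>P in \<open>blast intro: span_base\<close>)
  then have "q \<in> layer_sub P"
    using \<pi>P by (simp add: q_def layer_sub_def span_mul)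
  have bl: "bounded_linear ?\<pi>"
    using linear_orth_proj linear_conv_bounded_linear by blast
  have u': "u absolutely_integrable_on {0..1}" using u by (simp add: admissible_def)
  let ?A = "integral {0..1} (\<lambda>s. wedge (?X s) (u s))"
  have area: "norm (?A - Z) \<le> 6 * \<delta> * integral {0..1} (\<lambda>s. norm (u s))"
    unfolding Z_def using norm_integral_wedge_split_le[OF u' _ bl norm_orth_proj_le near] by simp
  have "hcurve u 1 - q = (?X 1 - ?\<pi> (?X 1), (1/2) *\<^sub>R (?A - Z))"
    by (simp add: hcurve_def q_def scaleR_diff_right)
  then have "norm (hcurve u 1 - q) \<le> norm (?X 1 - ?\<pi> (?X 1)) + norm ((1/2) *\<^sub>R (?A - Z))"
    by (simp only: norm_Pair_le)
  also have "\<dots> \<le> \<delta> + (1/2) * (6 * \<delta> * integral {0..1} (\<lambda>s. norm (u s)))"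
    using near[of 1] area by simp
  also have "\<dots> = \<delta> * (1 + 3 * integral {0..1} (\<lambda>s. norm (u s)))"
    by (simp add: algebra_simps)
  finally have "norm (hcurve u 1 - q) \<le> \<delta> * (1 + 3 * integral {0..1} (\<lambda>s. norm (u s)))" .
  with \<open>q \<in> layer_sub P\<close> show ?thesis by (rule that)
qed

lemma setdist_layer_sub_hcurve_le:
  fixes ip :: "'n::finite grp \<Rightarrow> 'n grp \<Rightarrow> real"
  assumes A: "adequate_ip ip"
  obtains K where "0 \<le> K" "\<And>u P \<epsilon>. admissible u \<Longrightarrow> subspace P \<Longrightarrow>
      (\<And>t. t \<in> {0..1} \<Longrightarrow> hdist_eu ip (proj (hcurve u t)) P < \<epsilon>) \<Longrightarrow>
      setdist_eu ip (hcurve u 1) (layer_sub P) \<le> K * \<epsilon> * (1 + 3 * integral {0..1} (\<lambda>s. norm (u s)))"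
proof -
  obtain c where c: "0 < c" "\<And>x P \<epsilon>. subspace P \<Longrightarrow> hdist_eu ip x P < \<epsilon> \<Longrightarrow> c * norm (x - orth_proj P x) < \<epsilon>"
    using hdist_eu_controls_orth_proj[OF A] by blast
  obtain C where C: "0 < C"
    "\<And>p q P. p \<in> carrierG \<Longrightarrow> q \<in> layer_sub P \<Longrightarrow> setdist_eu ip p (layer_sub P) \<le> C * norm (p - q)"
    using setdist_eu_layer_sub_le[OF A] by blast
  have "setdist_eu ip (hcurve u 1) (layer_sub P) \<le> C / c * \<epsilon> * (1 + 3 * integral {0..1} (\<lambda>s. norm (u s)))"
    if u: "admissible u" and P: "subspace P"
      and close: "\<And>t. t \<in> {0..1} \<Longrightarrow> hdist_eu ip (proj (hcurve u t)) P < \<epsilon>" for u :: "real \<Rightarrow> real ^ 'n" and P \<epsilon>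
  proof -
    have "norm (integral {0..s} u - orth_proj P (integral {0..s} u)) \<le> \<epsilon> / c" if "s \<in> {0..1}" for s
      using c(2)[OF P close[OF that]] c(1) by (simp add: proj_def hcurve_def field_simps)
    then obtain q where q: "q \<in> layer_sub P"
      "norm (hcurve u 1 - q) \<le> \<epsilon> / c * (1 + 3 * integral {0..1} (\<lambda>s. norm (u s)))"
      using hcurve_near_layer_sub[OF u P] by blast
    have "setdist_eu ip (hcurve u 1) (layer_sub P) \<le> C * norm (hcurve u 1 - q)"
      by (rule C(2)[OF hcurve_in_carrierG q(1)])
    also have "\<dots> \<le> C * (\<epsilon> / c * (1 + 3 * integral {0..1} (\<lambda>s. norm (u s))))"
      by (rule mult_left_mono[OF q(2)]) (use C(1) in simp)
    finally show ?thesis by simp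
  qed
  then show ?thesis using that[of "C / c"] C(1) c(1) by simp
qed

theorem mainTheorem4:
  fixes N :: "real ^ 'n \<Rightarrow> real"
    and ip :: "'n grp \<Rightarrow> 'n grp \<Rightarrow> real"
  assumes "CARD('n) \<ge> 2"
    and "is_norm N"
    and "adequate_ip ip"
  shows "\<exists>K. \<forall>\<epsilon>>0. \<forall>\<gamma> P.
           is_geodesic N 0 (\<gamma> 1) \<gamma> \<and> d_eu ip (\<gamma> 1) 0 = 1 \<and> subspace P
           \<and> (\<forall>t\<in>{0..1}. hdist_eu ip (proj (\<gamma> t)) P < \<epsilon>)
           \<longrightarrow> setdist_eu ip (\<gamma> 1) (layer_sub P) < K * \<epsilon>"
proof -
  obtain L where L: "\<And>\<gamma>. is_geodesic N 0 (\<gamma> 1) \<gamma> \<Longrightarrow> d_eu ip (\<gamma> 1) 0 = 1 \<Longrightarrow>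
      \<exists>u. admissible u \<and> (\<forall>t\<in>{0..1}. \<gamma> t = hcurve u t) \<and> integral {0..1} (\<lambda>s. norm (u s)) \<le> L"
    using geodesic_control_bounded[OF assms(2,3)] by blast
  obtain K where K: "0 \<le> K" "\<And>u P \<epsilon>. admissible u \<Longrightarrow> subspace P \<Longrightarrow>
      (\<And>t. t \<in> {0..1} \<Longrightarrow> hdist_eu ip (proj (hcurve u t)) P < \<epsilon>) \<Longrightarrow>
      setdist_eu ip (hcurve u 1) (layer_sub P) \<le> K * \<epsilon> * (1 + 3 * integral {0..1} (\<lambda>s. norm (u s)))"
    using setdist_layer_sub_hcurve_le[OF assms(3)] by blast
  show ?thesis
  proof (intro exI[of _ "K * (1 + 3 * L) + 1"] allI impI, elim conjE)
    fix \<epsilon> :: real and \<gamma> P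
    assume \<epsilon>: "0 < \<epsilon>" and geo: "is_geodesic N 0 (\<gamma> 1) \<gamma>" "d_eu ip (\<gamma> 1) 0 = 1"
      and P: "subspace P" and close: "\<forall>t\<in>{0..1}. hdist_eu ip (proj (\<gamma> t)) P < \<epsilon>"
    obtain u where u: "admissible u" "\<forall>t\<in>{0..1}. \<gamma> t = hcurve u t" "integral {0..1} (\<lambda>s. norm (u s)) \<le> L"
      using L[OF geo] by blast
    have "setdist_eu ip (\<gamma> 1) (layer_sub P) \<le> K * \<epsilon> * (1 + 3 * integral {0..1} (\<lambda>s. norm (u s)))"
      using K(2)[OF u(1) P] close u(2) by simp
    also have "\<dots> \<le> K * \<epsilon> * (1 + 3 * L)"
      using u(3) K(1) \<epsilon> by (intro mult_left_mono) simp_all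
    also have "\<dots> < (K * (1 + 3 * L) + 1) * \<epsilon>"
      using \<epsilon> by (simp add: algebra_simps)
    finally show "setdist_eu ip (\<gamma> 1) (layer_sub P) < (K * (1 + 3 * L) + 1) * \<epsilon>" .
  qed
qed

end
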